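(* $\displaystyle\liminf_{k\to\infty}\frac{\gamma(k)}{k}\leq\frac{9}{10}$ and $\displaystyle\limsup_{k\to\infty}\frac{\gamma(k)}{k}\leq\frac32$.
   Context: The Thue–Morse word is $\mathbf t=\mathbf t_1\mathbf t_2\cdots$ where $\mathbf t_i\in\{0,1\}$ has the parity of the number of $1$'s in the binary expansion of $i-1$. For positive integers $\alpha\le\beta$, $\langle\alpha,\beta\rangle=\mathbf t_\alpha\cdots\mathbf t_\beta$. A $k$-anti-power is a word $w_1\cdots w_k$ with $w_1,\dots,w_k$ pairwise distinct words of equal length. $\mathcal F(k)$ is the set of odd positive integers $m$ such that $\langle 1,km\rangle$ is a $k$-anti-power (this set is nonempty for every $k$). $\gamma(k)=\min\mathcal F(k)$. *)

theory Defs
  imports Complex_Main "HOL-Library.Extended_Real" "HOL-Library.Liminf_Limsup"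
begin

fun bin_ones :: "nat \<Rightarrow> nat" where
  "bin_ones n = (if n = 0 then 0 else n mod 2 + bin_ones (n div 2))"

text \<open>Thue--Morse word, 1-indexed: t_i is the parity of the number of 1's in binary of i-1.\<close>
definition tm :: "nat \<Rightarrow> nat" where
  "tm i = bin_ones (i - 1) mod 2"

definition tm_factor :: "nat \<Rightarrow> nat \<Rightarrow> nat list" where
  "tm_factor \<alpha> \<beta> = map tm [\<alpha>..<Suc \<beta>]"

definition anti_power :: "nat \<Rightarrow> 'a list \<Rightarrow> bool" where
  "anti_power k w \<longleftrightarrow> (\<exists>ws. length ws = k \<and> w = concat ws \<and>
      (\<forall>u\<in>set ws. \<forall>v\<in>set ws. length u = length v) \<and> distinct ws)"

definition F_set :: "nat \<Rightarrow> nat set" where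
  "F_set k = {m. odd m \<and> 0 < m \<and> anti_power k (tm_factor 1 (k * m))}"

definition gamma :: "nat \<Rightarrow> nat" where
  "gamma k = (LEAST m. m \<in> F_set k)"

end

theory Submission
  imports Defs
begin

text \<open>
  Cut \<open><1, k m>\<close> into k blocks of odd length m. The Thue--Morse word is recognizable: two
  agreeing windows of length \<open>3 * 2^c + 1\<close> start at positions congruent modulo \<open>2^(c+1)\<close>.
  As m is odd, two equal blocks \<open>i < j\<close> then satisfy \<open>2^(c+1) dvd j - i\<close>, so for
  \<open>k <= 2^(c+2)\<close> only \<open>j = i + 2^(c+1)\<close> remains. Block j is block i shifted by
  \<open>2^(c+1) * m\<close>, which compares the letters at \<open>2^(c+1) u + r\<close> and \<open>2^(c+1) (u + m) + r\<close>,
  that is \<open>t u\<close> with \<open>t (u + m)\<close>. For \<open>m = 3 * 2^c + 1\<close> (no three equal consecutive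
  letters) and \<open>m = 2^(c+2) + 3\<close> (no factor \<open>x x'\<close> with \<open>x'\<close> the complement of a word x of
  length 3) some u in range has \<open>t u ~= t (u + m)\<close>. Hence \<open>3 * 2^c + 1\<close> lies in \<open>F k\<close> for
  k up to about \<open>(10/3) 2^c\<close>, and \<open>2^(c+2) + 3\<close> for \<open>k <= 2^(c+2) - 3\<close>. These give
  \<open>gamma k <= 3k/2 + 8\<close> for all \<open>k >= 4\<close>, and \<open>gamma k / k <= 9/10 + 2^-c\<close> at the largest
  admissible k.
\<close>

section \<open>Letters of the Thue--Morse word\<close>

declare bin_ones.simps[simp del]

lemma bin_ones_0 [simp]: "bin_ones 0 = 0"
  by (simp add: bin_ones.simps)

lemma bin_ones_double [simp]: "bin_ones (2 * n) = bin_ones n"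
  by (cases "n = 0") (auto simp: bin_ones.simps[of "2 * n"])

lemma bin_ones_double_Suc [simp]: "bin_ones (Suc (2 * n)) = Suc (bin_ones n)"
  by (simp add: bin_ones.simps[of "Suc (2 * n)"])

definition thue_morse :: "nat \<Rightarrow> bool" where
  "thue_morse n \<longleftrightarrow> odd (bin_ones n)"

lemma tm_Suc: "tm (Suc n) = (if thue_morse n then 1 else 0)"
  by (simp add: tm_def thue_morse_def odd_iff_mod_2_eq_one)

lemma thue_morse_0 [simp]: "\<not> thue_morse 0"
  by (simp add: thue_morse_def)

lemma thue_morse_double [simp]: "thue_morse (2 * n) = thue_morse n"
  by (simp add: thue_morse_def)

lemma thue_morse_double_Suc [simp]: "thue_morse (Suc (2 * n)) = (\<not> thue_morse n)"
  by (simp add: thue_morse_def)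

lemma thue_morse_Suc_0 [simp]: "thue_morse (Suc 0)"
  using thue_morse_double_Suc[of 0] by simp

lemma thue_morse_double_add:
  assumes "r < 2" shows "thue_morse (2 * u + r) = (thue_morse u \<noteq> thue_morse r)"
  using assms by (cases r) (auto simp: less_Suc_eq mult_2[symmetric])

lemma thue_morse_pow2_mult_add:
  "r < 2 ^ b \<Longrightarrow> thue_morse (2 ^ b * u + r) = (thue_morse u \<noteq> thue_morse r)"
proof (induction b arbitrary: u r)
  case (Suc b)
  have "2 ^ Suc b * u + r = 2 * (2 ^ b * u + r div 2) + r mod 2"
    by simp
  moreover have "r = 2 * (r div 2) + r mod 2"
    by simp
  ultimately show ?case
    using Suc.IH[of "r div 2" u] Suc.prems thue_morse_double_add[of "r mod 2"]
    by (metis less_mult_imp_div_less mod_less_divisor pos2 power_Suc2)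
qed simp

lemma thue_morse_pow2_add: "r < 2 ^ b \<Longrightarrow> thue_morse (2 ^ b + r) = (\<not> thue_morse r)"
  using thue_morse_pow2_mult_add[of r b 1] by simp

lemma thue_morse_pow2: "thue_morse (2 ^ b)"
  using thue_morse_pow2_add[of 0 b] by simp

lemma thue_morse_even_Suc: "even x \<Longrightarrow> thue_morse (Suc x) = (\<not> thue_morse x)"
  by (elim evenE) simp

lemma thue_morse_not_three_equal:
  "\<not> (thue_morse n = thue_morse (n + 1) \<and> thue_morse (n + 1) = thue_morse (n + 2))"
proof (cases "even n")
  case True
  then show ?thesis by (simp add: thue_morse_even_Suc)
next
  case False
  then have "even (n + 1)" by simp
  then show ?thesis by (simp add: thue_morse_even_Suc)
qed

lemma thue_morse_odd_not_alternating:
  assumes "odd y"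
  shows "\<not> (thue_morse y \<noteq> thue_morse (y + 1) \<and> thue_morse (y + 1) \<noteq> thue_morse (y + 2)
            \<and> thue_morse (y + 2) \<noteq> thue_morse (y + 3))"
proof -
  obtain w where "y = 2 * w + 1"
    using assms by (elim oddE)
  then have "y = Suc (2 * w)" "y + 1 = 2 * (w + 1)" "y + 2 = Suc (2 * (w + 1))" "y + 3 = 2 * (w + 2)"
    by simp_all
  then show ?thesis
    using thue_morse_not_three_equal[of w] by (simp only: thue_morse_double thue_morse_double_Suc) auto
qed

text \<open>Two agreeing windows of opposite parity would be alternating at the odd position.\<close>

lemma thue_morse_agree_parity:
  assumes "\<forall>q<4. thue_morse (x + q) = thue_morse (y + q)"
  shows "even x \<longleftrightarrow> even y"
proof -
  have no_agreement: False
    if "even a" "odd b" and agree: "\<forall>q<4. thue_morse (a + q) = thue_morse (b + q)" for a b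
  proof -
    have "even (b + 1)" "even (a + 2)"
      using that by simp_all
    with agree[rule_format, of 0] agree[rule_format, of 1] agree[rule_format, of 2]
      agree[rule_format, of 3] \<open>even a\<close>
    show False
      using thue_morse_odd_not_alternating[OF \<open>odd b\<close>] thue_morse_even_Suc
      by (simp add: numeral_eq_Suc)
  qed
  show ?thesis
    using no_agreement[of x y] no_agreement[of y x] assms by auto
qed

lemma thue_morse_no_antisquare3:
  "\<not> (thue_morse u \<noteq> thue_morse (u + 3) \<and> thue_morse (u + 1) \<noteq> thue_morse (u + 4)
       \<and> thue_morse (u + 2) \<noteq> thue_morse (u + 5))"
proof (cases "even u")
  case True
  then have "odd (u + 1)" "even (u + 2)" "even (u + 4)"
    by simp_all
  with True show ?thesis
    using thue_morse_odd_not_alternating[of "u + 1"] thue_morse_even_Suc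
    by (simp add: numeral_eq_Suc) metis
next
  case False
  then have "even (u + 1)" "even (u + 3)"
    by simp_all
  with False show ?thesis
    using thue_morse_odd_not_alternating[of u] thue_morse_even_Suc
    by (simp add: numeral_eq_Suc) metis
qed

lemma thue_morse_agree_mod_pow2:
  assumes "3 * 2 ^ c + 1 \<le> L" and "\<forall>q<L. thue_morse (x + q) = thue_morse (y + q)"
  shows "x mod 2 ^ (c + 1) = y mod 2 ^ (c + 1)"
  using assms
proof (induction c arbitrary: x y L)
  case 0
  then show ?case
    using thue_morse_agree_parity[of x y] by (simp add: mod2_eq_if)
next
  case (Suc c)
  have "(1::nat) \<le> 2 ^ c"
    by simp
  with Suc.prems(1) have "4 \<le> L"
    unfolding power_Suc by linarith
  then have "\<forall>q<4. thue_morse (x + q) = thue_morse (y + q)"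
    using Suc.prems(2) by simp
  then have parity: "x mod 2 = y mod 2"
    using thue_morse_agree_parity[of x y] by (simp add: mod2_eq_if)
  have halve: "thue_morse (z + 2 * q) = (thue_morse (z div 2 + q) \<noteq> thue_morse (z mod 2))"
    for z q :: nat
  proof -
    have "z + 2 * q = 2 * (z div 2 + q) + z mod 2"
      by simp
    then show ?thesis
      by (simp only:) (rule thue_morse_double_add, simp)
  qed
  have "\<forall>q < 3 * 2 ^ c + 1. thue_morse (x div 2 + q) = thue_morse (y div 2 + q)"
  proof (intro allI impI)
    fix q :: nat
    assume "q < 3 * 2 ^ c + 1"
    with Suc.prems(1) have "2 * q < L"
      unfolding power_Suc by linarith
    then have "thue_morse (x + 2 * q) = thue_morse (y + 2 * q)"
      using Suc.prems(2) by blast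
    then show "thue_morse (x div 2 + q) = thue_morse (y div 2 + q)"
      unfolding halve parity by blast
  qed
  then have "(x div 2) mod 2 ^ (c + 1) = (y div 2) mod 2 ^ (c + 1)"
    using Suc.IH by blast
  then show ?case
    using parity by (simp only: add_Suc power_Suc mod_mult2_eq[of _ 2])
qed

lemma thue_morse_shift_three_pow2_plus_1_iff:
  assumes "u < 2 * 2 ^ c"
  shows "(thue_morse u \<noteq> thue_morse (u + (3 * 2 ^ c + 1)))
           = (thue_morse (u mod 2 ^ c) \<noteq> thue_morse (u mod 2 ^ c + 1))"
proof (cases "u < 2 ^ c")
  case True
  have "thue_morse (u + (3 * 2 ^ c + 1)) = thue_morse (u + 1)"
  proof (cases "u + 1 < 2 ^ c")
    case True
    then have "2 ^ c + (u + 1) < 2 ^ (c + 1)"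
      by simp
    then have "thue_morse (2 ^ (c + 1) + (2 ^ c + (u + 1))) = (\<not> thue_morse (2 ^ c + (u + 1)))"
      by (rule thue_morse_pow2_add)
    also have "\<dots> = thue_morse (u + 1)"
      using thue_morse_pow2_add[OF True] by simp
    moreover have "u + (3 * 2 ^ c + 1) = 2 ^ (c + 1) + (2 ^ c + (u + 1))"
      by simp
    ultimately show ?thesis
      by metis
  next
    case False
    with \<open>u < 2 ^ c\<close> have "u + 1 = 2 ^ c" "u + (3 * 2 ^ c + 1) = 2 ^ (c + 2)"
      by simp_all
    then show ?thesis
      using thue_morse_pow2 by metis
  qed
  then show ?thesis
    using True by simp
next
  case False
  define v where "v = u - 2 ^ c"
  have v: "u = 2 ^ c + v" "v < 2 ^ c"
    using False assms by (simp_all add: v_def)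
  have "v + 1 < 2 ^ (c + 2)"
    using v(2) by simp
  then have "thue_morse (2 ^ (c + 2) + (v + 1)) = (\<not> thue_morse (v + 1))"
    by (rule thue_morse_pow2_add)
  moreover have "u + (3 * 2 ^ c + 1) = 2 ^ (c + 2) + (v + 1)"
    using v(1) by simp
  moreover have "thue_morse u = (\<not> thue_morse v)"
    using thue_morse_pow2_add[OF v(2)] v(1) by simp
  ultimately show ?thesis
    using v by simp
qed

lemma thue_morse_shift_three_pow2_plus_1:
  assumes "u + 1 < 2 * 2 ^ c"
  shows "\<exists>s\<in>{0, 1}. thue_morse (u + s) \<noteq> thue_morse (u + s + (3 * 2 ^ c + 1))"
proof (cases "u mod 2 ^ c + 1 < 2 ^ c")
  case True
  define a where "a = u mod 2 ^ c"
  have "(u + 1) mod 2 ^ c = a + 1"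
    using True by (simp add: a_def mod_Suc)
  then have "(thue_morse (u + 0) \<noteq> thue_morse (u + 0 + (3 * 2 ^ c + 1))) = (thue_morse a \<noteq> thue_morse (a + 1))"
    "(thue_morse (u + 1) \<noteq> thue_morse (u + 1 + (3 * 2 ^ c + 1))) = (thue_morse (a + 1) \<noteq> thue_morse (a + 2))"
    using thue_morse_shift_three_pow2_plus_1_iff[of u c] thue_morse_shift_three_pow2_plus_1_iff[of "u + 1" c]
      assms by (simp_all add: a_def)
  then show ?thesis
    using thue_morse_not_three_equal[of a] by auto
next
  case False
  have "u mod 2 ^ c < 2 ^ c"
    by simp
  with False have "u mod 2 ^ c + 1 = 2 ^ c"
    by linarith
  then have "(u + 1) mod 2 ^ c = 0"
    by (simp add: mod_Suc)
  then have "thue_morse (u + 1) \<noteq> thue_morse (u + 1 + (3 * 2 ^ c + 1))"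
    using thue_morse_shift_three_pow2_plus_1_iff[of "u + 1" c] assms by simp
  then show ?thesis
    by blast
qed

lemma thue_morse_shift_pow2_plus_3:
  assumes "u + 5 < 2 ^ c"
  shows "\<exists>s\<in>{0, 1, 2}. thue_morse (u + s) \<noteq> thue_morse (u + s + (2 ^ c + 3))"
proof -
  have shift: "thue_morse (u + s + (2 ^ c + 3)) = (\<not> thue_morse (u + s + 3))" if "s < 3" for s
  proof -
    have "u + s + 3 < 2 ^ c"
      using that assms by simp
    then have "thue_morse (2 ^ c + (u + s + 3)) = (\<not> thue_morse (u + s + 3))"
      by (rule thue_morse_pow2_add)
    then show ?thesis
      by (simp add: add_ac)
  qed
  show ?thesis
    using shift[of 0] shift[of 1] shift[of 2] thue_morse_no_antisquare3[of u] by (auto simp: add_ac)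
qed

section \<open>Blocks and anti-powers\<close>

definition tm_block :: "nat \<Rightarrow> nat \<Rightarrow> nat list" where
  "tm_block m i = map tm [i * m + 1..<i * m + 1 + m]"

lemma tm_factor_eq_concat_blocks: "tm_factor 1 (k * m) = concat (map (tm_block m) [0..<k])"
proof (induction k)
  case 0
  then show ?case
    by (simp add: tm_factor_def)
next
  case (Suc k)
  have "[1..<Suc (Suc k * m)] = [1..<k * m + 1] @ [k * m + 1..<k * m + 1 + m]"
    using upt_add_eq_append[of 1 "k * m + 1" m] by (simp add: add_ac)
  then have "tm_factor 1 (Suc k * m) = tm_factor 1 (k * m) @ tm_block m k"
    by (simp add: tm_factor_def tm_block_def)
  then show ?case
    using Suc.IH by simp
qed

lemma nth_tm_block: "p < m \<Longrightarrow> tm_block m i ! p = (if thue_morse (i * m + p) then 1 else 0)"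
  by (simp add: tm_block_def tm_Suc[symmetric] del: upt_Suc)

lemma anti_power_tm_factorI:
  assumes "\<And>i j. i < j \<Longrightarrow> j < k \<Longrightarrow> \<exists>p<m. thue_morse (i * m + p) \<noteq> thue_morse (j * m + p)"
  shows "anti_power k (tm_factor 1 (k * m))"
proof -
  have "tm_block m i \<noteq> tm_block m j" if "i < j" "j < k" for i j
    using assms[OF that] nth_tm_block by (metis less_numeral_extra(3) zero_neq_one)
  then have "inj_on (tm_block m) {0..<k}"
    by (intro inj_onI) (metis atLeastLessThan_iff linorder_cases)
  then show ?thesis
    unfolding anti_power_def tm_factor_eq_concat_blocks
    by (intro exI[of _ "map (tm_block m) [0..<k]"]) (simp add: distinct_map tm_block_def)
qed

text \<open>
  The shift by \<open>2^n\<close> blocks moves position \<open>2^n u + r\<close> to \<open>2^n (u + m) + r\<close>; the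
  remainder r is chosen so that this position lies in block i.
\<close>

lemma thue_morse_blocks_shift_pow2_differ:
  assumes "s * 2 ^ n < m"
    and "thue_morse (i * m div 2 ^ n + s) \<noteq> thue_morse (i * m div 2 ^ n + s + m)"
  shows "\<exists>p<m. thue_morse (i * m + p) \<noteq> thue_morse ((i + 2 ^ n) * m + p)"
proof -
  define u where "u = i * m div 2 ^ n + s"
  define r :: nat where "r = (if s = 0 then i * m mod 2 ^ n else 0)"
  have "r < 2 ^ n"
    by (simp add: r_def)
  have "i * m \<le> 2 ^ n * u + r \<and> 2 ^ n * u + r < i * m + m"
  proof (cases "s = 0")
    case True
    then show ?thesis
      using assms(1) by (simp add: u_def r_def)
  next
    case False
    have "2 ^ n * u = 2 ^ n * (i * m div 2 ^ n) + s * 2 ^ n"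
      by (simp add: u_def algebra_simps)
    moreover have "i * m = 2 ^ n * (i * m div 2 ^ n) + i * m mod 2 ^ n" "i * m mod 2 ^ n < 2 ^ n"
      by simp_all
    moreover have "2 ^ n \<le> s * 2 ^ n"
      using False by simp
    moreover have "r = 0"
      using False by (simp add: r_def)
    ultimately show ?thesis
      using assms(1) by linarith
  qed
  then obtain p where p: "p < m" "i * m + p = 2 ^ n * u + r"
    by (intro that[of "2 ^ n * u + r - i * m"]) auto
  then have "(i + 2 ^ n) * m + p = 2 ^ n * (u + m) + r"
    by (simp add: algebra_simps)
  then have "thue_morse (i * m + p) \<noteq> thue_morse ((i + 2 ^ n) * m + p)"
    using p(2) assms(2) thue_morse_pow2_mult_add[OF \<open>r < 2 ^ n\<close>] by (simp add: u_def)
  with p(1) show ?thesis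
    by blast
qed

lemma thue_morse_agreeing_blocks_shift:
  assumes "odd m" "3 * 2 ^ c + 1 \<le> m" "i < j" "j < 2 * 2 ^ (c + 1)"
    and "\<forall>p<m. thue_morse (i * m + p) = thue_morse (j * m + p)"
  shows "j = i + 2 ^ (c + 1)"
proof -
  have "i * m \<le> j * m"
    using assms(3) by simp
  then have "2 ^ (c + 1) dvd j * m - i * m"
    by (rule mod_eq_dvd_iff_nat[THEN iffD1]) (rule thue_morse_agree_mod_pow2[OF assms(2,5), symmetric])
  then have "2 ^ (c + 1) dvd (j - i) * m"
    by (simp only: diff_mult_distrib)
  moreover have "coprime (2 ^ (c + 1)) m"
    using assms(1) by simp
  ultimately have "2 ^ (c + 1) dvd j - i"
    by (rule coprime_dvd_mult_left_iff[THEN iffD1, rotated])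
  then obtain q where q: "j - i = 2 ^ (c + 1) * q"
    by (rule dvdE)
  have "0 < 2 ^ (c + 1) * q" "2 ^ (c + 1) * q < 2 ^ (c + 1) * 2"
    unfolding q[symmetric] using assms(3,4) by linarith+
  then have "q = 1"
    by simp
  with q assms(3) show ?thesis
    by simp
qed

lemma mem_F_set_if_shifted_letters_differ:
  assumes "odd m" and "3 * 2 ^ c + 1 \<le> m" and "k \<le> 2 * 2 ^ (c + 1)"
    and "\<And>i. i + 2 ^ (c + 1) < k \<Longrightarrow> \<exists>s. s * 2 ^ (c + 1) < m \<and>
           thue_morse (i * m div 2 ^ (c + 1) + s) \<noteq> thue_morse (i * m div 2 ^ (c + 1) + s + m)"
  shows "m \<in> F_set k"
proof -
  have "anti_power k (tm_factor 1 (k * m))"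
  proof (rule anti_power_tm_factorI, rule ccontr)
    fix i j
    assume "i < j" "j < k" and "\<not> (\<exists>p<m. thue_morse (i * m + p) \<noteq> thue_morse (j * m + p))"
    then have agree: "\<forall>p<m. thue_morse (i * m + p) = thue_morse (j * m + p)"
      by blast
    have j: "j = i + 2 ^ (c + 1)"
      using \<open>j < k\<close> assms(3) by (intro thue_morse_agreeing_blocks_shift[OF assms(1,2) \<open>i < j\<close> _ agree]) simp
    then obtain s where "s * 2 ^ (c + 1) < m"
      and "thue_morse (i * m div 2 ^ (c + 1) + s) \<noteq> thue_morse (i * m div 2 ^ (c + 1) + s + m)"
      using assms(4) \<open>j < k\<close> by blast
    then have "\<exists>p<m. thue_morse (i * m + p) \<noteq> thue_morse ((i + 2 ^ (c + 1)) * m + p)"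
      by (rule thue_morse_blocks_shift_pow2_differ)
    with agree j show False
      by blast
  qed
  with assms(1) show ?thesis
    by (simp add: F_set_def odd_pos)
qed

lemma three_pow2_plus_1_mem_F_set:
  assumes "1 \<le> c" and "(k - 2 * 2 ^ c) * (3 * 2 ^ c + 1) \<le> 2 * 2 ^ c * (2 * 2 ^ c - 1)"
  shows "3 * 2 ^ c + 1 \<in> F_set k"
proof -
  define P :: nat where "P = 2 ^ (c + 1)"
  define m :: nat where "m = 3 * 2 ^ c + 1"
  have "P < m"
    by (simp add: P_def m_def)
  have k: "(k - P) * m \<le> P * (P - 1)"
    using assms(2) by (simp add: P_def m_def)
  have "P * (P - 1) < P * m"
    using \<open>P < m\<close> by (simp add: P_def)
  with k have "k - P < P"
    by (metis mult.commute mult_less_cancel1 order.strict_trans1)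
  then have "k \<le> 2 * P"
    by linarith
  moreover have "\<exists>s. s * P < m \<and> thue_morse (i * m div P + s) \<noteq> thue_morse (i * m div P + s + m)"
    if "i + P < k" for i
  proof -
    from that have "i + 1 \<le> k - P"
      by linarith
    then have "(i + 1) * m \<le> P * (P - 1)"
      using k by (meson mult_le_mono1 order.trans)
    then have "i * m < P * (P - 1)"
      using \<open>P < m\<close> by simp
    then have "i * m div P < P - 1"
      by (simp add: P_def div_less_iff_less_mult mult.commute)
    then have "i * m div P + 1 < 2 * 2 ^ c"
      by (simp add: P_def)
    then obtain s where "s \<in> {0, 1}" and "thue_morse (i * m div P + s) \<noteq> thue_morse (i * m div P + s + m)"
      using thue_morse_shift_three_pow2_plus_1[of "i * m div P" c, folded m_def] by blast
    moreover have "s * P < m"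
      using \<open>s \<in> {0, 1}\<close> \<open>P < m\<close> by auto
    ultimately show ?thesis
      by blast
  qed
  moreover have "odd m"
    using assms(1) by (simp add: m_def)
  ultimately show ?thesis
    unfolding m_def P_def by (intro mem_F_set_if_shifted_letters_differ[of _ c]) simp_all
qed

lemma pow2_plus_3_mem_F_set:
  assumes "k \<le> 2 ^ (c + 2) - 3"
  shows "2 ^ (c + 2) + 3 \<in> F_set k"
proof -
  define P :: nat where "P = 2 ^ (c + 1)"
  define m :: nat where "m = 2 ^ (c + 2) + 3"
  have m: "m = 2 * P + 3"
    by (simp add: m_def P_def)
  have "(4::nat) \<le> 2 ^ (c + 2)"
    using power_increasing[of 2 "c + 2" "2::nat"] by simp
  with assms have "k + 3 \<le> 2 ^ (c + 2)"
    by linarith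
  then have k: "k + 3 \<le> 2 * P"
    by (simp add: P_def)
  have "\<exists>s. s * P < m \<and> thue_morse (i * m div P + s) \<noteq> thue_morse (i * m div P + s + m)"
    if "i + P < k" for i
  proof -
    from that k have "i + 4 \<le> P"
      by linarith
    then have "i * m < P * (2 * i + 3)"
      by (simp add: m algebra_simps)
    then have "i * m div P < 2 * i + 3"
      by (simp add: P_def div_less_iff_less_mult mult.commute)
    with \<open>i + 4 \<le> P\<close> have "i * m div P + 5 < 2 ^ (c + 2)"
      by (simp add: P_def)
    then obtain s where "s \<in> {0, 1, 2}" and "thue_morse (i * m div P + s) \<noteq> thue_morse (i * m div P + s + m)"
      using thue_morse_shift_pow2_plus_3[of "i * m div P" "c + 2", folded m_def] by blast
    moreover have "s * P < m"
      using \<open>s \<in> {0, 1, 2}\<close> m by auto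
    ultimately show ?thesis
      by blast
  qed
  moreover have "odd m" "3 * 2 ^ c + 1 \<le> m" "k \<le> 2 * P"
    using k by (simp_all add: m_def P_def)
  ultimately show ?thesis
    unfolding m_def P_def by (intro mem_F_set_if_shifted_letters_differ[of _ c]) simp_all
qed

section \<open>Upper bounds for gamma\<close>

lemma gamma_le: "m \<in> F_set k \<Longrightarrow> gamma k \<le> m"
  unfolding gamma_def by (rule Least_le)

lemma gamma_le_linear_dyadic:
  assumes "1 \<le> c" and "2 * 2 ^ c \<le> k" and "k < 4 * 2 ^ c"
  shows "2 * gamma k \<le> 3 * k + 16"
proof -
  define H :: nat where "H = 2 ^ c"
  have "2 \<le> H"
    using power_increasing[OF assms(1), of "2::nat"] by (simp add: H_def)
  consider "k < 3 * H" | "3 * H \<le> k" "k \<le> 4 * H - 3" | "4 * H - 3 < k"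
    by linarith
  then show ?thesis
  proof cases
    case 1
    define G where "G = H - 1"
    have G: "H = G + 1"
      using \<open>2 \<le> H\<close> by (simp add: G_def)
    have "(k - 2 * H) * (3 * H + 1) \<le> (H - 1) * (3 * H + 1)"
      using 1 by (intro mult_le_mono1) linarith
    also have "\<dots> \<le> 2 * H * (2 * H - 1)"
      unfolding G by (simp add: algebra_simps)
    finally have "gamma k \<le> 3 * H + 1"
      using gamma_le[OF three_pow2_plus_1_mem_F_set[OF assms(1)]] by (simp add: H_def)
    then show ?thesis
      using assms(2) by (simp add: H_def)
  next
    case 2
    then have "gamma k \<le> 4 * H + 3"
      using gamma_le[OF pow2_plus_3_mem_F_set[of k c]] by (simp add: H_def)
    then show ?thesis
      using 2 by linarith
  next
    case 3
    have "gamma k \<le> 6 * H + 1"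
      using gamma_le[OF three_pow2_plus_1_mem_F_set[of "c + 1" k]] assms(3) by (simp add: H_def)
    then show ?thesis
      using 3 by linarith
  qed
qed

lemma gamma_le_linear:
  assumes "4 \<le> k"
  shows "2 * gamma k \<le> 3 * k + 16"
proof -
  obtain n where n: "2 ^ n \<le> k" "k < 2 ^ (n + 1)"
    using ex_power_ivl1[of 2 k] assms by auto
  have "2 \<le> n"
  proof (rule ccontr)
    assume "\<not> 2 \<le> n"
    then have "(2::nat) ^ (n + 1) \<le> 2 ^ 2"
      by (intro power_increasing) simp_all
    with n assms show False
      by (simp add: power2_eq_square)
  qed
  define c where "c = n - 1"
  have "n = Suc c" "1 \<le> c"
    using \<open>2 \<le> n\<close> by (simp_all add: c_def)
  with n show ?thesis
    using gamma_le_linear_dyadic[of c k] by simp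
qed

text \<open>The largest k to which lemma \<open>three_pow2_plus_1_mem_F_set\<close> applies.\<close>

definition k_max_three_pow2_plus_1 :: "nat \<Rightarrow> nat" where
  "k_max_three_pow2_plus_1 c = 2 * 2 ^ c + (2 * 2 ^ c * (2 * 2 ^ c - 1)) div (3 * 2 ^ c + 1)"

lemma gamma_k_max_three_pow2_plus_1:
  assumes "1 \<le> c"
  shows "gamma (k_max_three_pow2_plus_1 c) \<le> 3 * 2 ^ c + 1"
proof -
  define n :: nat where "n = 2 * 2 ^ c * (2 * 2 ^ c - 1)"
  have "(k_max_three_pow2_plus_1 c - 2 * 2 ^ c) * (3 * 2 ^ c + 1) = n div (3 * 2 ^ c + 1) * (3 * 2 ^ c + 1)"
    by (simp only: k_max_three_pow2_plus_1_def n_def add_diff_cancel_left')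
  also have "\<dots> \<le> n"
    by (rule div_times_less_eq_dividend)
  finally show ?thesis
    unfolding n_def by (rule gamma_le[OF three_pow2_plus_1_mem_F_set[OF assms]])
qed

lemma strict_mono_k_max_three_pow2_plus_1: "strict_mono k_max_three_pow2_plus_1"
  unfolding strict_mono_Suc_iff
proof
  fix c
  define H :: nat where "H = 2 ^ c"
  have "(2 * H * (2 * H - 1)) div (3 * H + 1) \<le> (2 * H * (2 * H - 1)) div (2 * H)"
    by (rule div_le_mono2) (simp_all add: H_def)
  also have "\<dots> < 2 * H"
    by (simp add: H_def)
  finally show "k_max_three_pow2_plus_1 c < k_max_three_pow2_plus_1 (Suc c)"
    by (simp add: k_max_three_pow2_plus_1_def H_def)
qed

lemma nine_tenths_ratio_bound:
  fixes H :: nat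
  assumes "3 \<le> H"
  shows "10 * H * (3 * H + 1) \<le> (9 * H + 10) * (2 * H + (2 * H * (2 * H - 1)) div (3 * H + 1))"
proof -
  define D where "D = (2 * H * (2 * H - 1)) div (3 * H + 1)"
  define G where "G = H - 3"
  have G: "H = G + 3"
    using assms by (simp add: G_def)
  have "H * (3 * H + 1) \<le> 2 * H * (2 * H - 1)"
    unfolding G by (simp add: algebra_simps)
  then have "H \<le> D"
    by (simp add: D_def less_eq_div_iff_mult_less_eq)
  have "2 * H * (2 * H - 1) < (3 * H + 1) + D * (3 * H + 1)"
    unfolding D_def by (rule dividend_less_div_times) simp
  moreover have "2 * H * (2 * H - 1) + 2 * H = 4 * (H * H)"
    unfolding G by (simp add: algebra_simps)
  ultimately have "4 * (H * H) < 3 * (H * D) + D + 5 * H + 1"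
    by (simp add: algebra_simps)
  moreover have "(9 * H + 10) * (2 * H + D) = 18 * (H * H) + 9 * (H * D) + 20 * H + 10 * D"
    "10 * H * (3 * H + 1) = 30 * (H * H) + 10 * H"
    by (simp_all add: algebra_simps)
  ultimately show ?thesis
    using \<open>H \<le> D\<close> unfolding D_def[symmetric] by linarith
qed

lemma gamma_ratio_k_max_three_pow2_plus_1:
  assumes "2 \<le> c"
  shows "real (gamma (k_max_three_pow2_plus_1 c)) / real (k_max_three_pow2_plus_1 c) \<le> 9 / 10 + 1 / 2 ^ c"
proof -
  define H :: nat where "H = 2 ^ c"
  define K where "K = k_max_three_pow2_plus_1 c"
  have "4 \<le> H"
    using power_increasing[OF assms, of "2::nat"] by (simp add: H_def)
  have "gamma K \<le> 3 * H + 1"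
    using gamma_k_max_three_pow2_plus_1[of c] assms by (simp add: H_def K_def)
  then have "10 * H * gamma K \<le> 10 * H * (3 * H + 1)"
    by (rule mult_le_mono2)
  also have "\<dots> \<le> (9 * H + 10) * K"
    unfolding K_def k_max_three_pow2_plus_1_def H_def[symmetric]
    by (rule nine_tenths_ratio_bound) (use \<open>4 \<le> H\<close> in linarith)
  finally have "real (10 * H * gamma K) \<le> real ((9 * H + 10) * K)"
    by (rule of_nat_mono)
  then have "10 * real H * real (gamma K) \<le> (9 * real H + 10) * real K"
    by simp
  moreover have "0 < K"
    by (simp add: K_def k_max_three_pow2_plus_1_def)
  moreover have "0 < real H" "2 ^ c = real H"
    using \<open>4 \<le> H\<close> by (simp_all add: H_def)
  ultimately show ?thesis
    unfolding K_def[symmetric] \<open>2 ^ c = real H\<close> by (simp add: field_simps)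
qed

lemma liminf_gamma_ratio_le: "liminf (\<lambda>k. ereal (real (gamma k) / real k)) \<le> ereal (9 / 10)"
proof -
  define f where "f = (\<lambda>k. ereal (real (gamma k) / real k))"
  have "liminf f \<le> liminf (f \<circ> k_max_three_pow2_plus_1)"
    by (rule liminf_subseq_mono[OF strict_mono_k_max_three_pow2_plus_1])
  also have "\<dots> \<le> liminf (\<lambda>c. ereal (9 / 10 + 1 / 2 ^ c))"
    using eventually_ge_at_top[of 2]
    by (rule Liminf_mono[OF eventually_mono]) (simp add: f_def gamma_ratio_k_max_three_pow2_plus_1)
  also have "\<dots> = ereal (9 / 10)"
  proof (rule lim_imp_Liminf)
    have "(\<lambda>c. 1 / 2 ^ c :: real) \<longlonglongrightarrow> 0"
      using LIMSEQ_inverse_realpow_zero[of 2] by (simp add: divide_inverse)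
    then have "(\<lambda>c. 9 / 10 + 1 / 2 ^ c :: real) \<longlonglongrightarrow> 9 / 10 + 0"
      by (intro tendsto_add tendsto_const)
    then show "(\<lambda>c. ereal (9 / 10 + 1 / 2 ^ c)) \<longlonglongrightarrow> ereal (9 / 10)"
      by (intro tendsto_ereal) simp
  qed simp
  finally show ?thesis
    unfolding f_def .
qed

lemma limsup_gamma_ratio_le: "limsup (\<lambda>k. ereal (real (gamma k) / real k)) \<le> ereal (3 / 2)"
proof -
  have "\<forall>\<^sub>F k in sequentially. ereal (real (gamma k) / real k) \<le> ereal (3 / 2 + 8 / real k)"
    using eventually_ge_at_top[of 4]
  proof eventually_elim
    case (elim k)
    then have "real (2 * gamma k) \<le> real (3 * k + 16)"
      using gamma_le_linear by (intro of_nat_mono)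
    then have "2 * real (gamma k) \<le> 3 * real k + 16"
      by simp
    with elim show ?case
      by (simp add: field_simps)
  qed
  then have "limsup (\<lambda>k. ereal (real (gamma k) / real k)) \<le> limsup (\<lambda>k. ereal (3 / 2 + 8 / real k))"
    by (rule Limsup_mono)
  also have "\<dots> = ereal (3 / 2)"
  proof (rule lim_imp_Limsup)
    have "(\<lambda>k. 3 / 2 + 8 / real k) \<longlonglongrightarrow> 3 / 2 + 0"
      by (intro tendsto_add tendsto_const lim_const_over_n)
    then show "(\<lambda>k. ereal (3 / 2 + 8 / real k)) \<longlonglongrightarrow> ereal (3 / 2)"
      by (intro tendsto_ereal) simp
  qed simp
  finally show ?thesis .
qed

theorem theorem4:
  shows "liminf (\<lambda>k. ereal (real (gamma k) / real k)) \<le> ereal (9/10) \<and>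
         limsup (\<lambda>k. ereal (real (gamma k) / real k)) \<le> ereal (3/2)"
  using liminf_gamma_ratio_le limsup_gamma_ratio_le by simp

end
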